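(* Let $K\ge 2$ be an integer, let $\boldsymbol{\alpha}=(\alpha_1,\dots,\alpha_K)$ with $\alpha_k\ge 1$ for all $k$ (equivalently $\alpha_k=e_k+1$ with evidence $e_k\ge 0$), let $S=\sum_{k=1}^K\alpha_k$, and let $\mathbf p\sim\mathrm{Dir}(\boldsymbol\alpha)$, $y\mid\mathbf p\sim\mathrm{Cat}(\mathbf p)$. With the uncertainty measures $u_v,u_{diss},u_{alea},u_{epis},u_{en}$ defined in the context, the following hold. 1. For every such $\boldsymbol\alpha$: (a) $u_v+u_{diss}\le 1$; (b) $u_v>u_{epis}$. 2. (a) If $\boldsymbol\alpha=(1,\dots,1)$, then $1=u_v=u_{en}>u_{alea}>u_{epis}>u_{diss}=0$. (b) If $\alpha_1=\alpha_2=\cdots=\alpha_K$, then $u_{en}=1$, and as $S\to\infty$ we have $u_{diss}\to 1$, $u_{alea}\to 1$, $u_v\to 0$, $u_{epis}\to 0$; moreover, for all sufficiently large $S$, $u_{en}>u_{alea}>u_{diss}>u_v>u_{epis}$.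
   Context: Subjective-logic opinion associated with $\boldsymbol\alpha$ (base rates $1/K$, non-informative weight $W=K$): belief masses $b_k=(\alpha_k-1)/S$ and vacuity $u_v=K/S$, so $\sum_k b_k+u_v=1$. Dissonance: $u_{diss}=\sum_{k=1}^K \frac{b_k\sum_{j\ne k} b_j\,\mathrm{Bal}(b_j,b_k)}{\sum_{j\ne k} b_j}$, where $\mathrm{Bal}(b_j,b_k)=1-\frac{|b_j-b_k|}{b_j+b_k}$ if $b_jb_k\neq 0$ and $\mathrm{Bal}(b_j,b_k)=0$ if $\min(b_j,b_k)=0$; a summand whose denominator $\sum_{j\ne k}b_j$ is $0$ is taken to be $0$. Let $H_K(\mathbf q)=-\sum_{k=1}^K q_k\log_K q_k$ (entropy with logarithm base $K$). Entropy: $u_{en}=H_K(\mathbb E[\mathbf p])$ where $\mathbb E[\mathbf p]=\boldsymbol\alpha/S$. Aleatoric uncertainty: $u_{alea}=\mathbb E_{\mathbf p\sim\mathrm{Dir}(\boldsymbol\alpha)}[H_K(\mathbf p)]$. Epistemic uncertainty (mutual information between $y$ and $\mathbf p$): $u_{epis}=u_{en}-u_{alea}$. *)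

theory Defs
  imports "HOL-Analysis.Analysis"
begin

text \<open>Concentration parameters are functions alpha :: nat => real; only the
  values at indices 0..K-1 (i.e. k < K) matter.\<close>

definition Ssum :: "nat \<Rightarrow> (nat \<Rightarrow> real) \<Rightarrow> real" where
  "Ssum K \<alpha> = (\<Sum>k<K. \<alpha> k)"

definition belief :: "nat \<Rightarrow> (nat \<Rightarrow> real) \<Rightarrow> nat \<Rightarrow> real" where
  "belief K \<alpha> k = (\<alpha> k - 1) / Ssum K \<alpha>"

definition u_v :: "nat \<Rightarrow> (nat \<Rightarrow> real) \<Rightarrow> real" where
  "u_v K \<alpha> = real K / Ssum K \<alpha>"

definition Bal :: "real \<Rightarrow> real \<Rightarrow> real" where
  "Bal x y = (if x * y \<noteq> 0 then 1 - \<bar>x - y\<bar> / (x + y) else 0)"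

definition u_diss :: "nat \<Rightarrow> (nat \<Rightarrow> real) \<Rightarrow> real" where
  "u_diss K \<alpha> = (\<Sum>k<K.
     (let b = belief K \<alpha>; D = (\<Sum>j\<in>{..<K} - {k}. b j) in
      if D = 0 then 0
      else b k * (\<Sum>j\<in>{..<K} - {k}. b j * Bal (b j) (b k)) / D))"

text \<open>Entropy with logarithm base K (note log K 0 = 0, so 0 log 0 = 0).\<close>
definition H :: "nat \<Rightarrow> (nat \<Rightarrow> real) \<Rightarrow> real" where
  "H K q = - (\<Sum>k<K. q k * log (real K) (q k))"

definition u_en :: "nat \<Rightarrow> (nat \<Rightarrow> real) \<Rightarrow> real" where
  "u_en K \<alpha> = H K (\<lambda>k. \<alpha> k / Ssum K \<alpha>)"

text \<open>Dirichlet distribution, via its standard density on the simplex,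
  parametrised by the first K-1 coordinates (p_{K-1} = 1 - sum of the others).\<close>

definition dir_extend :: "nat \<Rightarrow> (nat \<Rightarrow> real) \<Rightarrow> nat \<Rightarrow> real" where
  "dir_extend K q = (\<lambda>k. if k < K - 1 then q k else 1 - (\<Sum>j<K - 1. q j))"

definition dir_simplex :: "nat \<Rightarrow> (nat \<Rightarrow> real) set" where
  "dir_simplex K = {q. (\<forall>k<K - 1. 0 \<le> q k) \<and> (\<Sum>j<K - 1. q j) \<le> 1}"

definition dir_density :: "nat \<Rightarrow> (nat \<Rightarrow> real) \<Rightarrow> (nat \<Rightarrow> real) \<Rightarrow> real" where
  "dir_density K \<alpha> p =
     Gamma (Ssum K \<alpha>) / (\<Prod>k<K. Gamma (\<alpha> k)) * (\<Prod>k<K. p k powr (\<alpha> k - 1))"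

definition dir_expect :: "nat \<Rightarrow> (nat \<Rightarrow> real) \<Rightarrow> ((nat \<Rightarrow> real) \<Rightarrow> real) \<Rightarrow> real" where
  "dir_expect K \<alpha> f =
     (\<integral>q. indicator (dir_simplex K) q * dir_density K \<alpha> (dir_extend K q) * f (dir_extend K q)
        \<partial>(PiM {..<K - 1} (\<lambda>_. lborel)))"

definition u_alea :: "nat \<Rightarrow> (nat \<Rightarrow> real) \<Rightarrow> real" where
  "u_alea K \<alpha> = dir_expect K \<alpha> (H K)"

definition u_epis :: "nat \<Rightarrow> (nat \<Rightarrow> real) \<Rightarrow> real" where
  "u_epis K \<alpha> = u_en K \<alpha> - u_alea K \<alpha>"

end

(* For p ~ Dir(alpha) the normalisation of the Dirichlet density gives the moments
   E p_k = c_k = alpha_k / S and E (p_k - c_k)^2 = c_k (1 - c_k) / (S + 1).  Sandwiching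
   x ln x on [0, 1] between the two quadratics through its tangent at c_k with leading
   coefficients 1/2 and 1/c_k turns these moments into

     0 < u_en - u_alea <= (K - 1) / ((S + 1) ln K) < K / S = u_v,

   Dissonance is at most
   the total belief 1 - u_v, with equality when all alpha_k are equal and exceed 1; then
   u_en = 1 and u_alea is squeezed between 1 - K/S and 1, which gives the limits and the
   eventual ordering.  For alpha = (1, ..., 1) the bound 2 (K - 1) / (K + 1) < ln K
   gives u_alea > 1/2, hence u_alea > u_epis = 1 - u_alea. *)

theory Submission
  imports Defs
begin

section \<open>Elementary inequalities\<close>

lemma diff_le_ln_diff:
  fixes x y :: real
  assumes "0 < x" "x \<le> y" "y \<le> 1"
  shows "y - x \<le> ln y - ln x"
proof -
  have "ln (x / y) \<le> x / y - 1" using assms by (intro ln_le_minus_one) simp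
  then have "1 - x / y \<le> ln y - ln x" using assms by (simp add: ln_div)
  moreover have "(y - x) * y \<le> y - x" using assms by (intro mult_left_le) auto
  then have "y - x \<le> 1 - x / y" using assms by (simp add: field_simps)
  ultimately show ?thesis by linarith
qed

lemma xlnx_le_quadratic:
  fixes p c :: real
  assumes "0 \<le> p" "0 < c"
  shows "p * ln p \<le> c * ln c + (1 + ln c) * (p - c) + 1 / c * (p - c)\<^sup>2"
proof (cases "p = 0")
  case True
  then show ?thesis using assms by (simp add: power2_eq_square field_simps)
next
  case False
  then have p: "0 < p" using assms by simp
  have "ln (p / c) \<le> p / c - 1" using p assms by (intro ln_le_minus_one) simp
  then have "p * (ln p - ln c) \<le> p * (p / c - 1)"
    using p assms by (intro mult_left_mono) (auto simp: ln_div)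
  then show ?thesis using assms by (simp add: field_simps power2_eq_square)
qed

lemma xlnx_ge_quadratic:
  fixes p c :: real
  assumes "0 \<le> p" "p \<le> 1" "0 < c" "c < 1"
  shows "c * ln c + (1 + ln c) * (p - c) + 1 / 2 * (p - c)\<^sup>2 \<le> p * ln p"
proof (cases "p = 0")
  case True
  have "c * c \<le> 2 * c" using assms by (intro mult_right_mono) auto
  then show ?thesis using True assms by (simp add: power2_eq_square algebra_simps)
next
  case False
  define f where "f x = x * ln x - x\<^sup>2 / 2" for x :: real
  define f' where "f' x = ln x + 1 - x" for x :: real
  have der: "(f has_real_derivative f' x) (at x)" if "x \<in> {0<..1}" for x
    using that unfolding f_def f'_def
    by (auto intro!: derivative_eq_intros simp: power2_eq_square)
  have "convex_on {0<..1} f"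
  proof (rule convex_on_realI[OF _ der])
    fix x y :: real
    assume "x \<in> {0<..1}" "y \<in> {0<..1}" "x \<le> y"
    then show "f' x \<le> f' y" using diff_le_ln_diff[of x y] by (simp add: f'_def)
  qed auto
  then have "f' c * (p - c) \<le> f p - f c"
    using assms False
    by (intro convex_on_imp_above_tangent) (auto intro!: DERIV_subset[OF der])
  then show ?thesis unfolding f_def f'_def by (simp add: power2_eq_square field_simps)
qed

lemma abs_xlnx_le_one:
  fixes p :: real
  assumes "0 \<le> p" "p \<le> 1"
  shows "\<bar>p * ln p\<bar> \<le> 1"
proof (cases "p = 0")
  case False
  then have p: "0 < p" using assms by simp
  have "ln (1 / p) \<le> 1 / p - 1" using p by (intro ln_le_minus_one) simp
  then have "p * - ln p \<le> p * (1 / p - 1)" using p by (intro mult_left_mono) (auto simp: ln_div)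
  moreover have "p * ln p \<le> 0" using assms p by (simp add: mult_nonneg_nonpos)
  ultimately show ?thesis using p assms by (simp add: algebra_simps)
qed simp

lemma ln_gt_two_diff_div_sum:
  fixes x :: real
  assumes "1 < x"
  shows "2 * (x - 1) / (x + 1) < ln x"
proof -
  define f where "f z = ln z - 2 * (z - 1) / (z + 1)" for z :: real
  have "(f has_real_derivative (1 / z - 4 / (z + 1)\<^sup>2)) (at z)" if "1 \<le> z" for z
    using that unfolding f_def
    by (auto intro!: derivative_eq_intros simp: power2_eq_square field_simps)
  then obtain z where z: "1 < z" "z < x" "f x - f 1 = (x - 1) * (1 / z - 4 / (z + 1)\<^sup>2)"
    using MVT2[OF assms, of f] by force
  have "0 < (z - 1)\<^sup>2" using z by simp
  then have "4 * z < (z + 1)\<^sup>2" by (simp add: power2_eq_square algebra_simps)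
  then have "4 / (z + 1)\<^sup>2 < 1 / z" using z by (simp add: field_simps)
  then have "0 < f x - f 1" using assms z by simp
  then show ?thesis by (simp add: f_def)
qed

section \<open>The Dirichlet integral\<close>

lemma nn_integral_beta:
  fixes a b :: real
  assumes "0 < a" "0 < b"
  shows "(\<integral>\<^sup>+u. ennreal (indicator {0..1} u * (u powr (a - 1) * (1 - u) powr (b - 1))) \<partial>lborel)
       = ennreal (Beta a b)"
proof -
  have "(\<lambda>u. indicator {0..1} u * (u powr (a - 1) * (1 - u) powr (b - 1)))
      = (\<lambda>u. if u \<in> {0..1} then u powr (a - 1) * (1 - u) powr (b - 1) else 0)"
    by (auto simp: indicator_def)
  then have "((\<lambda>u. indicator {0..1} u * (u powr (a - 1) * (1 - u) powr (b - 1))) has_integral Beta a b) UNIV"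
    using has_integral_Beta_real[OF assms] by (simp only: has_integral_restrict_UNIV)
  then show ?thesis
    by (intro nn_integral_has_integral_lborel) (auto simp: indicator_def)
qed

lemma nn_integral_beta_scaled:
  fixes a b s :: real
  assumes "0 < a" "0 < b" "0 < s"
  shows "(\<integral>\<^sup>+t. ennreal (indicator {0..s} t * (t powr (a - 1) * (s - t) powr (b - 1))) \<partial>lborel)
       = ennreal (s powr (a + b - 1) * Beta a b)"
proof -
  let ?f = "\<lambda>t. ennreal (indicator {0..s} t * (t powr (a - 1) * (s - t) powr (b - 1)))"
  let ?g = "\<lambda>u. indicator {0..1} u * (u powr (a - 1) * (1 - u) powr (b - 1))"
  have scale: "?f (0 + s * u) = ennreal (s powr (a + b - 2)) * ennreal (?g u)" for u
  proof (cases "u \<in> {0..1}")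
    case True
    then have "s * u \<in> {0..s}" using assms by (auto simp: mult_le_cancel_left1)
    moreover have "(s * u) powr (a - 1) = s powr (a - 1) * u powr (a - 1)"
      using True assms by (simp add: powr_mult)
    moreover have "(s - s * u) powr (b - 1) = s powr (b - 1) * (1 - u) powr (b - 1)"
      using True assms by (simp add: powr_mult[symmetric] right_diff_distrib)
    moreover have "s powr (a + b - 2) = s powr (a - 1) * s powr (b - 1)"
      using assms by (simp add: powr_add[symmetric])
    ultimately show ?thesis using True assms by (simp add: ennreal_mult'[symmetric] mult_ac)
  next
    case False
    then have "s * u \<notin> {0..s}" using assms by (auto simp: zero_le_mult_iff mult_le_cancel_left1)
    then show ?thesis using False by simp
  qed
  have "(\<integral>\<^sup>+t. ?f t \<partial>lborel) = ennreal s * (\<integral>\<^sup>+u. ?f (0 + s * u) \<partial>lborel)"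
    using assms by (subst nn_integral_real_affine[where c = s and t = 0]) auto
  also have "\<dots> = ennreal s * (ennreal (s powr (a + b - 2)) * ennreal (Beta a b))"
    unfolding scale by (subst nn_integral_cmult) (auto simp: nn_integral_beta assms)
  also have "\<dots> = ennreal (s powr (a + b - 1) * Beta a b)"
  proof -
    have "s * s powr (a + b - 2) = s powr (a + b - 1)"
      using assms by (simp add: powr_add[symmetric] powr_mult_base)
    moreover have "0 \<le> Beta a b" using assms by (simp add: Beta_def less_imp_le)
    ultimately show ?thesis using assms by (simp add: ennreal_mult[symmetric] mult.assoc[symmetric])
  qed
  finally show ?thesis .
qed

definition lower_simplex :: "nat \<Rightarrow> real \<Rightarrow> (nat \<Rightarrow> real) set" where
  "lower_simplex n s = {q. (\<forall>k<n. 0 \<le> q k) \<and> (\<Sum>k<n. q k) \<le> s}"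

definition dirichlet_kernel :: "nat \<Rightarrow> (nat \<Rightarrow> real) \<Rightarrow> real \<Rightarrow> (nat \<Rightarrow> real) \<Rightarrow> real" where
  "dirichlet_kernel n a s q = (\<Prod>k<n. q k powr (a k - 1)) * (s - (\<Sum>k<n. q k)) powr (a n - 1)"

lemma pred_lower_simplex [measurable]:
  "Measurable.pred (PiM {..<n} (\<lambda>_. lborel::real measure)) (\<lambda>q. q \<in> lower_simplex n s)"
  unfolding lower_simplex_def mem_Collect_eq
  by (simp add: lessThan_iff[symmetric] del: lessThan_iff) measurable

lemma borel_measurable_dirichlet_kernel [measurable]:
  "dirichlet_kernel n a s \<in> borel_measurable (PiM {..<n} (\<lambda>_. lborel::real measure))"
  unfolding dirichlet_kernel_def by measurable

lemma not_in_lower_simplex_neg: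
  assumes "s < 0"
  shows "q \<notin> lower_simplex n s"
proof
  assume "q \<in> lower_simplex n s"
  then have "0 \<le> (\<Sum>k<n. q k)" "(\<Sum>k<n. q k) \<le> s"
    by (auto simp: lower_simplex_def intro: sum_nonneg)
  then show False using assms by linarith
qed

interpretation lborel_product: product_sigma_finite "\<lambda>_::nat. lborel::real measure"
  by standard

text \<open>Fixing the last free coordinate \<open>q m = t\<close> leaves a simplex of mass \<open>s - t\<close>
  whose slack coordinate carries the exponent of \<open>a (Suc m)\<close>.\<close>
lemma nn_integral_lower_simplex_Suc:
  "(\<integral>\<^sup>+q. ennreal (indicator (lower_simplex (Suc m) s) q * dirichlet_kernel (Suc m) a s q)
      \<partial>PiM {..<Suc m} (\<lambda>_. lborel))
   = (\<integral>\<^sup>+t. ennreal (indicator {0..} t * t powr (a m - 1)) *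
       (\<integral>\<^sup>+x. ennreal (indicator (lower_simplex m (s - t)) x *
           dirichlet_kernel m (a(m := a (Suc m))) (s - t) x) \<partial>PiM {..<m} (\<lambda>_. lborel)) \<partial>lborel)"
proof -
  let ?G = "\<lambda>q. ennreal (indicator (lower_simplex (Suc m) s) q * dirichlet_kernel (Suc m) a s q)"
  have split: "?G (x(m := t)) = ennreal (indicator {0..} t * t powr (a m - 1)) *
      ennreal (indicator (lower_simplex m (s - t)) x * dirichlet_kernel m (a(m := a (Suc m))) (s - t) x)"
    for x t
  proof -
    have sum: "(\<Sum>k<Suc m. (x(m := t)) k) = (\<Sum>k<m. x k) + t"
      by (simp add: lessThan_Suc)
    have "x(m := t) \<in> lower_simplex (Suc m) s \<longleftrightarrow> 0 \<le> t \<and> x \<in> lower_simplex m (s - t)"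
      unfolding lower_simplex_def mem_Collect_eq sum by (auto simp: less_Suc_eq)
    moreover have "dirichlet_kernel (Suc m) a s (x(m := t)) =
        t powr (a m - 1) * dirichlet_kernel m (a(m := a (Suc m))) (s - t) x"
      unfolding dirichlet_kernel_def sum by (simp add: lessThan_Suc algebra_simps)
    ultimately show ?thesis
      by (auto simp: indicator_def ennreal_mult'[symmetric] mult_ac)
  qed
  have meas: "?G \<in> borel_measurable (PiM {..<Suc m} (\<lambda>_. lborel))"
    by measurable
  have "(\<integral>\<^sup>+q. ?G q \<partial>PiM {..<Suc m} (\<lambda>_. lborel))
      = (\<integral>\<^sup>+t. (\<integral>\<^sup>+x. ?G (x(m := t)) \<partial>PiM {..<m} (\<lambda>_. lborel)) \<partial>lborel)"
    unfolding lessThan_Suc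
    by (rule lborel_product.product_nn_integral_insert_rev[OF _ _ meas[unfolded lessThan_Suc]]) auto
  also have "\<dots> = (\<integral>\<^sup>+t. ennreal (indicator {0..} t * t powr (a m - 1)) *
       (\<integral>\<^sup>+x. ennreal (indicator (lower_simplex m (s - t)) x *
           dirichlet_kernel m (a(m := a (Suc m))) (s - t) x) \<partial>PiM {..<m} (\<lambda>_. lborel)) \<partial>lborel)"
    unfolding split by (subst nn_integral_cmult) auto
  finally show ?thesis .
qed

lemma nn_integral_dirichlet_kernel_Suc:
  fixes a :: "nat \<Rightarrow> real"
  assumes inner: "\<And>r. 0 < r \<Longrightarrow>
      (\<integral>\<^sup>+x. ennreal (indicator (lower_simplex m r) x * dirichlet_kernel m (a(m := a (Suc m))) r x)
        \<partial>PiM {..<m} (\<lambda>_. lborel)) = ennreal (r powr (A - 1) * C)"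
    and "0 \<le> C" "0 < a m" "0 < A" "0 < s"
  shows "(\<integral>\<^sup>+q. ennreal (indicator (lower_simplex (Suc m) s) q * dirichlet_kernel (Suc m) a s q)
      \<partial>PiM {..<Suc m} (\<lambda>_. lborel)) = ennreal (C * (s powr (a m + A - 1) * Beta (a m) A))"
proof -
  have pointwise: "ennreal (indicator {0..} t * t powr (a m - 1)) *
      (\<integral>\<^sup>+x. ennreal (indicator (lower_simplex m (s - t)) x *
        dirichlet_kernel m (a(m := a (Suc m))) (s - t) x) \<partial>PiM {..<m} (\<lambda>_. lborel))
    = ennreal C * ennreal (indicator {0..s} t * (t powr (a m - 1) * (s - t) powr (A - 1)))"
    if "t \<noteq> s" for t
  proof (cases "t < s")
    case True
    then show ?thesis
      using inner[of "s - t"] \<open>0 \<le> C\<close> by (auto simp: indicator_def ennreal_mult'[symmetric] mult_ac)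
  next
    case False
    then show ?thesis using \<open>t \<noteq> s\<close> by (simp add: not_in_lower_simplex_neg)
  qed
  have "(\<integral>\<^sup>+q. ennreal (indicator (lower_simplex (Suc m) s) q * dirichlet_kernel (Suc m) a s q)
      \<partial>PiM {..<Suc m} (\<lambda>_. lborel))
    = (\<integral>\<^sup>+t. ennreal C * ennreal (indicator {0..s} t * (t powr (a m - 1) * (s - t) powr (A - 1)))
      \<partial>lborel)"
    unfolding nn_integral_lower_simplex_Suc
    by (intro nn_integral_cong_AE) (rule eventually_mono[OF AE_lborel_singleton[of s] pointwise])
  also have "\<dots> = ennreal C * ennreal (s powr (a m + A - 1) * Beta (a m) A)"
    using assms by (subst nn_integral_cmult) (auto simp: nn_integral_beta_scaled)
  finally show ?thesis using \<open>0 \<le> C\<close> by (simp add: ennreal_mult')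
qed

lemma nn_integral_dirichlet_kernel:
  fixes a :: "nat \<Rightarrow> real"
  assumes "\<forall>k<Suc n. 0 < a k" "0 < s"
  shows "(\<integral>\<^sup>+q. ennreal (indicator (lower_simplex n s) q * dirichlet_kernel n a s q)
      \<partial>PiM {..<n} (\<lambda>_. lborel))
    = ennreal (s powr ((\<Sum>k<Suc n. a k) - 1) * (\<Prod>k<Suc n. Gamma (a k)) / Gamma (\<Sum>k<Suc n. a k))"
  using assms
proof (induction n arbitrary: a s)
  case 0
  moreover have "Gamma (a 0) \<noteq> 0" using 0 by (simp add: less_imp_neq[symmetric])
  ultimately show ?case
    unfolding lessThan_0
    by (subst lborel_product.nn_integral_empty) (auto simp: lower_simplex_def dirichlet_kernel_def)
next
  case (Suc m)
  define a' where "a' = a(m := a (Suc m))"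
  define A' where "A' = (\<Sum>k<Suc m. a' k)"
  define C' where "C' = (\<Prod>k<Suc m. Gamma (a' k)) / Gamma A'"
  have a'_pos: "\<forall>k<Suc m. 0 < a' k" using Suc.prems by (auto simp: a'_def)
  then have "0 < A'" unfolding A'_def by (intro sum_pos) auto
  then have "0 \<le> C'" unfolding C'_def using a'_pos
    by (intro divide_nonneg_nonneg prod_nonneg) (auto simp: less_imp_le)
  have "(\<integral>\<^sup>+q. ennreal (indicator (lower_simplex (Suc m) s) q * dirichlet_kernel (Suc m) a s q)
      \<partial>PiM {..<Suc m} (\<lambda>_. lborel)) = ennreal (C' * (s powr (a m + A' - 1) * Beta (a m) A'))"
    using Suc.IH[OF a'_pos] Suc.prems \<open>0 \<le> C'\<close> \<open>0 < A'\<close>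
    by (intro nn_integral_dirichlet_kernel_Suc) (simp_all add: a'_def[symmetric] A'_def C'_def)
  also have "C' * (s powr (a m + A' - 1) * Beta (a m) A')
      = s powr ((\<Sum>k<Suc (Suc m). a k) - 1) * (\<Prod>k<Suc (Suc m). Gamma (a k)) / Gamma (\<Sum>k<Suc (Suc m). a k)"
  proof -
    have sum: "(\<Sum>k<Suc (Suc m). a k) = a m + A'" by (simp add: A'_def a'_def)
    have prod: "(\<Prod>k<Suc (Suc m). Gamma (a k)) = (\<Prod>k<Suc m. Gamma (a' k)) * Gamma (a m)"
      by (simp add: a'_def)
    have "Gamma A' \<noteq> 0" using \<open>0 < A'\<close> by (simp add: less_imp_neq[symmetric])
    then show ?thesis
      unfolding sum prod C'_def Beta_def by (simp add: field_simps del: prod.lessThan_Suc)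
  qed
  finally show ?case .
qed

section \<open>Moments of the Dirichlet distribution\<close>

lemma dir_simplex_Suc: "dir_simplex (Suc n) = lower_simplex n 1"
  by (simp add: dir_simplex_def lower_simplex_def)

lemma dir_extend_nonneg:
  assumes "q \<in> dir_simplex (Suc n)" "k < Suc n"
  shows "0 \<le> dir_extend (Suc n) q k"
  using assms by (auto simp: dir_simplex_def dir_extend_def)

lemma dir_extend_le_one:
  assumes "q \<in> dir_simplex (Suc n)" "k < Suc n"
  shows "dir_extend (Suc n) q k \<le> 1"
proof -
  have "dir_extend (Suc n) q k \<le> (\<Sum>j<Suc n. dir_extend (Suc n) q j)"
    using assms by (intro member_le_sum) (auto intro: dir_extend_nonneg)
  also have "\<dots> = 1" by (simp add: dir_extend_def)
  finally show ?thesis .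
qed

lemma nn_integral_dirichlet:
  assumes "\<forall>k<Suc n. 0 < \<beta> k"
  shows "(\<integral>\<^sup>+q. ennreal (indicator (dir_simplex (Suc n)) q *
            (\<Prod>k<Suc n. dir_extend (Suc n) q k powr (\<beta> k - 1))) \<partial>PiM {..<n} (\<lambda>_. lborel))
       = ennreal ((\<Prod>k<Suc n. Gamma (\<beta> k)) / Gamma (\<Sum>k<Suc n. \<beta> k))"
proof -
  have "(\<Prod>k<Suc n. dir_extend (Suc n) q k powr (\<beta> k - 1)) = dirichlet_kernel n \<beta> 1 q" for q
    by (simp add: dirichlet_kernel_def dir_extend_def)
  then show ?thesis
    using nn_integral_dirichlet_kernel[OF assms zero_less_one] by (simp add: dir_simplex_Suc)
qed

definition dir_weight :: "nat \<Rightarrow> (nat \<Rightarrow> real) \<Rightarrow> (nat \<Rightarrow> real) \<Rightarrow> real" where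
  "dir_weight K \<alpha> q = indicator (dir_simplex K) q * dir_density K \<alpha> (dir_extend K q)"

lemma dir_expect_eq_integral:
  "dir_expect K \<alpha> f = (\<integral>q. dir_weight K \<alpha> q * f (dir_extend K q) \<partial>PiM {..<K - 1} (\<lambda>_. lborel))"
  by (simp add: dir_expect_def dir_weight_def)

lemma borel_measurable_dir_extend [measurable]:
  "(\<lambda>q. dir_extend (Suc n) q j) \<in> borel_measurable (PiM {..<n} (\<lambda>_. lborel::real measure))"
  unfolding dir_extend_def by (cases "j < n") auto

lemma pred_dir_simplex [measurable]:
  "Measurable.pred (PiM {..<n} (\<lambda>_. lborel::real measure)) (\<lambda>q. q \<in> dir_simplex (Suc n))"
  unfolding dir_simplex_Suc by measurable

lemma borel_measurable_dir_weight [measurable]: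
  "dir_weight (Suc n) \<alpha> \<in> borel_measurable (PiM {..<n} (\<lambda>_. lborel::real measure))"
  unfolding dir_weight_def dir_density_def by measurable

lemma Ssum_pos: "0 < K \<Longrightarrow> \<forall>k<K. 0 < \<alpha> k \<Longrightarrow> 0 < Ssum K \<alpha>"
  unfolding Ssum_def by (intro sum_pos) auto

lemma component_lt_Ssum:
  assumes "\<forall>k<K. 0 < \<alpha> k" "j < K" "2 \<le> K"
  shows "\<alpha> j < Ssum K \<alpha>"
proof -
  define i where "i = (if j = 0 then 1 else 0 :: nat)"
  have "i \<in> {..<K} - {j}" using assms by (auto simp: i_def)
  then have "0 < (\<Sum>k\<in>{..<K} - {j}. \<alpha> k)"
    using assms(1) by (intro sum_pos2[of _ i]) (auto simp: less_imp_le)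
  moreover have "Ssum K \<alpha> = \<alpha> j + (\<Sum>k\<in>{..<K} - {j}. \<alpha> k)"
    using assms(2) by (simp add: Ssum_def sum.remove)
  ultimately show ?thesis by simp
qed

lemma dir_weight_nonneg:
  assumes "\<forall>k<Suc n. 0 < \<alpha> k"
  shows "0 \<le> dir_weight (Suc n) \<alpha> q"
  using Ssum_pos[OF zero_less_Suc assms] assms
  by (auto simp: dir_weight_def dir_density_def less_imp_le
      intro!: mult_nonneg_nonneg divide_nonneg_nonneg prod_nonneg simp del: prod.lessThan_Suc)

lemma power_mult_powr:
  fixes p a :: real
  assumes "0 \<le> p"
  shows "p ^ e * p powr a = p powr (a + real e)"
  using assms by (cases "p = 0") (auto simp: powr_realpow[symmetric] powr_add)

lemma Gamma_add_of_nat: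
  fixes x :: real
  assumes "0 < x"
  shows "Gamma (x + real e) = Gamma x * pochhammer x e"
proof -
  have "x \<notin> \<int>\<^sub>\<le>\<^sub>0" using assms by auto
  then show ?thesis using pochhammer_Gamma[of x e] Gamma_real_pos[OF assms] by (simp add: field_simps)
qed

lemma dir_weight_mult_power:
  assumes "j < Suc n"
  shows "dir_weight (Suc n) \<alpha> q * dir_extend (Suc n) q j ^ e
    = Gamma (Ssum (Suc n) \<alpha>) / (\<Prod>k<Suc n. Gamma (\<alpha> k)) * (indicator (dir_simplex (Suc n)) q *
        (\<Prod>k<Suc n. dir_extend (Suc n) q k powr ((\<alpha>(j := \<alpha> j + real e)) k - 1)))"
proof (cases "q \<in> dir_simplex (Suc n)")
  case True
  have "(\<Prod>k<Suc n. dir_extend (Suc n) q k powr ((\<alpha>(j := \<alpha> j + real e)) k - 1))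
      = (\<Prod>k<Suc n. (if k = j then dir_extend (Suc n) q j ^ e else 1)
          * dir_extend (Suc n) q k powr (\<alpha> k - 1))"
    using power_mult_powr[OF dir_extend_nonneg[OF True]] by (intro prod.cong) (auto simp: algebra_simps)
  then show ?thesis
    using True assms by (simp add: prod.distrib dir_weight_def dir_density_def)
qed (simp add: dir_weight_def)

lemma nn_integral_dir_weight_power:
  fixes \<alpha> :: "nat \<Rightarrow> real"
  assumes \<alpha>: "\<forall>k<Suc n. 0 < \<alpha> k" and j: "j < Suc n"
  shows "(\<integral>\<^sup>+q. ennreal (dir_weight (Suc n) \<alpha> q * dir_extend (Suc n) q j ^ e) \<partial>PiM {..<n} (\<lambda>_. lborel))
    = ennreal (pochhammer (\<alpha> j) e / pochhammer (Ssum (Suc n) \<alpha>) e)"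
proof -
  define S where "S = Ssum (Suc n) \<alpha>"
  define \<beta> where "\<beta> = \<alpha>(j := \<alpha> j + real e)"
  define c where "c = Gamma S / (\<Prod>k<Suc n. Gamma (\<alpha> k))"
  have "0 < S" unfolding S_def using \<alpha> by (intro Ssum_pos) auto
  have \<beta>: "\<forall>k<Suc n. 0 < \<beta> k" using \<alpha> by (auto simp: \<beta>_def add_pos_nonneg)
  have \<Gamma>: "0 < (\<Prod>k<Suc n. Gamma (\<alpha> k))" using \<alpha> by (intro prod_pos) auto
  then have "0 \<le> c" using \<open>0 < S\<close> by (simp add: c_def)
  have "(\<Sum>k<Suc n. \<beta> k) = (\<Sum>k<Suc n. \<alpha> k + (if k = j then real e else 0))"
    by (intro sum.cong) (auto simp: \<beta>_def)
  then have sum_\<beta>: "(\<Sum>k<Suc n. \<beta> k) = S + real e"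
    using j by (simp add: sum.distrib S_def Ssum_def del: sum.lessThan_Suc)
  have "(\<Prod>k<Suc n. Gamma (\<beta> k))
      = (\<Prod>k<Suc n. Gamma (\<alpha> k) * (if k = j then pochhammer (\<alpha> j) e else 1))"
    using \<alpha> j by (intro prod.cong) (auto simp: \<beta>_def Gamma_add_of_nat)
  then have prod_\<beta>: "(\<Prod>k<Suc n. Gamma (\<beta> k)) = (\<Prod>k<Suc n. Gamma (\<alpha> k)) * pochhammer (\<alpha> j) e"
    using j by (simp add: prod.distrib del: prod.lessThan_Suc)
  have closed_form: "c * ((\<Prod>k<Suc n. Gamma (\<beta> k)) / Gamma (\<Sum>k<Suc n. \<beta> k))
      = pochhammer (\<alpha> j) e / pochhammer S e"
    unfolding sum_\<beta> prod_\<beta> c_def Gamma_add_of_nat[OF \<open>0 < S\<close>]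
    using less_imp_neq[OF \<Gamma>] Gamma_real_pos[OF \<open>0 < S\<close>] pochhammer_pos[OF \<open>0 < S\<close>, of e]
    by (simp add: field_simps del: prod.lessThan_Suc prod_zero_iff)
  have "(\<integral>\<^sup>+q. ennreal (dir_weight (Suc n) \<alpha> q * dir_extend (Suc n) q j ^ e) \<partial>PiM {..<n} (\<lambda>_. lborel))
      = ennreal c * ennreal ((\<Prod>k<Suc n. Gamma (\<beta> k)) / Gamma (\<Sum>k<Suc n. \<beta> k))"
    unfolding dir_weight_mult_power[OF j] S_def[symmetric] c_def[symmetric] \<beta>_def[symmetric]
      ennreal_mult'[OF \<open>0 \<le> c\<close>]
    by (subst nn_integral_cmult) (auto simp: nn_integral_dirichlet[OF \<beta>] simp del: prod.lessThan_Suc)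
  also have "\<dots> = ennreal (pochhammer (\<alpha> j) e / pochhammer S e)"
    unfolding ennreal_mult'[OF \<open>0 \<le> c\<close>, symmetric] closed_form ..
  finally show ?thesis unfolding S_def .
qed

lemma dirichlet_moment:
  fixes \<alpha> :: "nat \<Rightarrow> real"
  assumes \<alpha>: "\<forall>k<Suc n. 0 < \<alpha> k" and j: "j < Suc n"
  shows "has_bochner_integral (PiM {..<n} (\<lambda>_. lborel))
     (\<lambda>q. dir_weight (Suc n) \<alpha> q * dir_extend (Suc n) q j ^ e)
     (pochhammer (\<alpha> j) e / pochhammer (Ssum (Suc n) \<alpha>) e)"
proof (rule has_bochner_integral_nn_integral)
  show "0 \<le> pochhammer (\<alpha> j) e / pochhammer (Ssum (Suc n) \<alpha>) e"
    using \<alpha> j Ssum_pos[OF zero_less_Suc \<alpha>] by (intro divide_nonneg_nonneg pochhammer_nonneg) auto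
  have "0 \<le> dir_weight (Suc n) \<alpha> q * dir_extend (Suc n) q j ^ e" for q
    using dir_weight_nonneg[OF \<alpha>, of q] dir_extend_nonneg[OF _ j, of q]
    by (cases "q \<in> dir_simplex (Suc n)") (simp_all add: dir_weight_def)
  then show "AE q in PiM {..<n} (\<lambda>_. lborel). 0 \<le> dir_weight (Suc n) \<alpha> q * dir_extend (Suc n) q j ^ e"
    by simp
qed (simp_all add: nn_integral_dir_weight_power[OF \<alpha> j])

lemma dirichlet_quadratic_about_mean:
  fixes \<alpha> :: "nat \<Rightarrow> real"
  assumes \<alpha>: "\<forall>k<Suc n. 0 < \<alpha> k" and j: "j < Suc n"
  defines "S \<equiv> Ssum (Suc n) \<alpha>"
  defines "c \<equiv> \<alpha> j / S"
  shows "has_bochner_integral (PiM {..<n} (\<lambda>_. lborel))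
     (\<lambda>q. dir_weight (Suc n) \<alpha> q *
        (A + B * (dir_extend (Suc n) q j - c) + C * (dir_extend (Suc n) q j - c)\<^sup>2))
     (A + C * (c * (1 - c) / (S + 1)))"
proof -
  let ?w = "dir_weight (Suc n) \<alpha>" and ?p = "\<lambda>q. dir_extend (Suc n) q j"
  have "0 < S" unfolding S_def using \<alpha> by (intro Ssum_pos) auto
  note moment = dirichlet_moment[OF \<alpha> j, folded S_def]
  let ?a = "A - B * c + C * c\<^sup>2" and ?b = "B - 2 * C * c"
  have integral: "has_bochner_integral (PiM {..<n} (\<lambda>_. lborel))
     (\<lambda>q. ?a * (?w q * ?p q ^ 0) + ?b * (?w q * ?p q ^ 1) + C * (?w q * ?p q ^ 2))
     (?a * (pochhammer (\<alpha> j) 0 / pochhammer S 0) + ?b * (pochhammer (\<alpha> j) 1 / pochhammer S 1)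
        + C * (pochhammer (\<alpha> j) 2 / pochhammer S 2))"
    by (intro has_bochner_integral_add has_bochner_integral_mult_right moment)
  have integrand: "(\<lambda>q. ?a * (?w q * ?p q ^ 0) + ?b * (?w q * ?p q ^ 1) + C * (?w q * ?p q ^ 2))
      = (\<lambda>q. ?w q * (A + B * (?p q - c) + C * (?p q - c)\<^sup>2))"
    by (simp add: fun_eq_iff power2_eq_square algebra_simps)
  have "\<alpha> j = c * S" using \<open>0 < S\<close> by (simp add: c_def)
  then have second: "pochhammer (\<alpha> j) 2 / pochhammer S 2 = c * (c * S + 1) / (S + 1)"
    using \<open>0 < S\<close> by (simp add: numeral_2_eq_2 pochhammer_Suc)
  have closed_form: "?a * (pochhammer (\<alpha> j) 0 / pochhammer S 0) + ?b * (pochhammer (\<alpha> j) 1 / pochhammer S 1)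
        + C * (pochhammer (\<alpha> j) 2 / pochhammer S 2) = A + C * (c * (1 - c) / (S + 1))"
    unfolding second using \<open>0 < S\<close> \<open>\<alpha> j = c * S\<close> by (simp add: field_simps power2_eq_square)
  show ?thesis using integral unfolding integrand closed_form .
qed

lemma integrable_dir_weight:
  assumes "\<forall>k<Suc n. 0 < \<alpha> k"
  shows "integrable (PiM {..<n} (\<lambda>_. lborel)) (dir_weight (Suc n) \<alpha>)"
  using integrable.intros[OF dirichlet_moment[OF assms zero_less_Suc, of 0]] by simp

lemma integrable_dir_weight_xlnx:
  assumes \<alpha>: "\<forall>k<Suc n. 0 < \<alpha> k" and j: "j < Suc n"
  shows "integrable (PiM {..<n} (\<lambda>_. lborel))
    (\<lambda>q. dir_weight (Suc n) \<alpha> q * (dir_extend (Suc n) q j * ln (dir_extend (Suc n) q j)))"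
proof (rule Bochner_Integration.integrable_bound[OF integrable_dir_weight[OF \<alpha>]])
  show "AE q in PiM {..<n} (\<lambda>_. lborel).
      norm (dir_weight (Suc n) \<alpha> q * (dir_extend (Suc n) q j * ln (dir_extend (Suc n) q j)))
      \<le> norm (dir_weight (Suc n) \<alpha> q)"
  proof (intro AE_I2)
    fix q
    show "norm (dir_weight (Suc n) \<alpha> q * (dir_extend (Suc n) q j * ln (dir_extend (Suc n) q j)))
      \<le> norm (dir_weight (Suc n) \<alpha> q)"
    proof (cases "q \<in> dir_simplex (Suc n)")
      case True
      then have "\<bar>dir_extend (Suc n) q j * ln (dir_extend (Suc n) q j)\<bar> \<le> 1"
        using j by (intro abs_xlnx_le_one dir_extend_nonneg dir_extend_le_one)
      then show ?thesis by (simp add: abs_mult mult_left_le)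
    qed (simp add: dir_weight_def)
  qed
qed measurable

lemma dir_expect_xlnx_le:
  fixes \<alpha> :: "nat \<Rightarrow> real"
  assumes \<alpha>: "\<forall>k<Suc n. 0 < \<alpha> k" and j: "j < Suc n"
  defines "S \<equiv> Ssum (Suc n) \<alpha>"
  defines "c \<equiv> \<alpha> j / S"
  shows "dir_expect (Suc n) \<alpha> (\<lambda>p. p j * ln (p j)) \<le> c * ln c + (1 - c) / (S + 1)"
proof -
  let ?M = "PiM {..<n} (\<lambda>_. lborel)" and ?w = "dir_weight (Suc n) \<alpha>"
    and ?p = "\<lambda>q. dir_extend (Suc n) q j"
  have "0 < S" unfolding S_def using \<alpha> by (intro Ssum_pos) auto
  then have "0 < c" using \<alpha> j by (simp add: c_def)
  note quadratic = dirichlet_quadratic_about_mean[OF \<alpha> j, folded S_def c_def,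
      of "c * ln c" "1 + ln c" "1 / c"]
  have "dir_expect (Suc n) \<alpha> (\<lambda>p. p j * ln (p j)) = integral\<^sup>L ?M (\<lambda>q. ?w q * (?p q * ln (?p q)))"
    by (simp add: dir_expect_eq_integral)
  also have "\<dots> \<le> integral\<^sup>L ?M
      (\<lambda>q. ?w q * (c * ln c + (1 + ln c) * (?p q - c) + 1 / c * (?p q - c)\<^sup>2))"
  proof (rule integral_mono[OF integrable_dir_weight_xlnx[OF \<alpha> j] integrable.intros[OF quadratic]])
    fix q
    show "?w q * (?p q * ln (?p q)) \<le> ?w q * (c * ln c + (1 + ln c) * (?p q - c) + 1 / c * (?p q - c)\<^sup>2)"
    proof (cases "q \<in> dir_simplex (Suc n)")
      case True
      then show ?thesis
        using j \<open>0 < c\<close> dir_weight_nonneg[OF \<alpha>]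
        by (intro mult_left_mono xlnx_le_quadratic dir_extend_nonneg) auto
    qed (simp add: dir_weight_def)
  qed
  also have "\<dots> = c * ln c + (1 - c) / (S + 1)"
    using has_bochner_integral_integral_eq[OF quadratic] \<open>0 < c\<close> by simp
  finally show ?thesis .
qed

lemma dir_expect_xlnx_gt:
  fixes \<alpha> :: "nat \<Rightarrow> real"
  assumes \<alpha>: "\<forall>k<Suc n. 0 < \<alpha> k" and j: "j < Suc n" and "0 < n"
  defines "c \<equiv> \<alpha> j / Ssum (Suc n) \<alpha>"
  shows "c * ln c < dir_expect (Suc n) \<alpha> (\<lambda>p. p j * ln (p j))"
proof -
  let ?M = "PiM {..<n} (\<lambda>_. lborel)" and ?w = "dir_weight (Suc n) \<alpha>"
    and ?p = "\<lambda>q. dir_extend (Suc n) q j"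
  define S where "S = Ssum (Suc n) \<alpha>"
  have "0 < S" unfolding S_def using \<alpha> by (intro Ssum_pos) auto
  have "0 < c" using \<alpha> j \<open>0 < S\<close> by (simp add: c_def S_def)
  have "c < 1"
    using component_lt_Ssum[OF \<alpha> j] \<open>0 < n\<close> \<open>0 < S\<close> by (simp add: c_def S_def)
  note quadratic = dirichlet_quadratic_about_mean[OF \<alpha> j, folded S_def c_def,
      of "c * ln c" "1 + ln c" "1 / 2"]
  have "c * ln c < c * ln c + 1 / 2 * (c * (1 - c) / (S + 1))"
    using \<open>0 < c\<close> \<open>c < 1\<close> \<open>0 < S\<close> by simp
  also have "\<dots> = integral\<^sup>L ?M
      (\<lambda>q. ?w q * (c * ln c + (1 + ln c) * (?p q - c) + 1 / 2 * (?p q - c)\<^sup>2))"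
    using has_bochner_integral_integral_eq[OF quadratic] by simp
  also have "\<dots> \<le> integral\<^sup>L ?M (\<lambda>q. ?w q * (?p q * ln (?p q)))"
  proof (rule integral_mono[OF integrable.intros[OF quadratic] integrable_dir_weight_xlnx[OF \<alpha> j]])
    fix q
    show "?w q * (c * ln c + (1 + ln c) * (?p q - c) + 1 / 2 * (?p q - c)\<^sup>2) \<le> ?w q * (?p q * ln (?p q))"
    proof (cases "q \<in> dir_simplex (Suc n)")
      case True
      then show ?thesis
        using j \<open>0 < c\<close> \<open>c < 1\<close> dir_weight_nonneg[OF \<alpha>]
        by (intro mult_left_mono xlnx_ge_quadratic dir_extend_nonneg dir_extend_le_one) auto
    qed (simp add: dir_weight_def)
  qed
  also have "\<dots> = dir_expect (Suc n) \<alpha> (\<lambda>p. p j * ln (p j))"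
    by (simp add: dir_expect_eq_integral)
  finally show ?thesis .
qed

section \<open>Aleatoric and epistemic uncertainty\<close>

lemma u_en_eq_sum:
  "u_en K \<alpha> = - (\<Sum>k<K. \<alpha> k / Ssum K \<alpha> * ln (\<alpha> k / Ssum K \<alpha>)) / ln (real K)"
  by (simp add: u_en_def H_def log_def sum_divide_distrib)

lemma u_alea_eq_sum:
  assumes "0 < K" "\<forall>k<K. 0 < \<alpha> k"
  shows "u_alea K \<alpha> = - (\<Sum>k<K. dir_expect K \<alpha> (\<lambda>p. p k * ln (p k))) / ln (real K)"
proof -
  obtain n where K: "K = Suc n" using assms(1) by (cases K) auto
  let ?M = "PiM {..<n} (\<lambda>_. lborel)" and ?w = "dir_weight K \<alpha>" and ?p = "dir_extend K"
  have "u_alea K \<alpha> = integral\<^sup>L ?M (\<lambda>q. - (\<Sum>k<K. ?w q * (?p q k * ln (?p q k))) / ln (real K))"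
    by (simp add: u_alea_def dir_expect_eq_integral H_def log_def K sum_divide_distrib
        sum_distrib_left del: sum.lessThan_Suc)
  also have "\<dots> = - (\<Sum>k<K. integral\<^sup>L ?M (\<lambda>q. ?w q * (?p q k * ln (?p q k)))) / ln (real K)"
    using integrable_dir_weight_xlnx[OF assms(2)[unfolded K]]
    by (simp add: K integral_sum del: sum.lessThan_Suc)
  finally show ?thesis by (simp add: dir_expect_eq_integral K)
qed

lemma u_alea_less_u_en:
  assumes "2 \<le> K" "\<forall>k<K. 0 < \<alpha> k"
  shows "u_alea K \<alpha> < u_en K \<alpha>"
proof -
  obtain n where K: "K = Suc n" and "0 < n" using assms(1) by (cases K) auto
  have "(\<Sum>k<K. \<alpha> k / Ssum K \<alpha> * ln (\<alpha> k / Ssum K \<alpha>))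
      < (\<Sum>k<K. dir_expect K \<alpha> (\<lambda>p. p k * ln (p k)))"
    using assms dir_expect_xlnx_gt[OF assms(2)[unfolded K] _ \<open>0 < n\<close>]
    by (intro sum_strict_mono) (auto simp: K)
  moreover have "0 < ln (real K)" using assms(1) by simp
  ultimately show ?thesis
    using assms by (simp add: u_alea_eq_sum u_en_eq_sum divide_strict_right_mono)
qed

lemma u_en_le_u_alea_add:
  assumes "2 \<le> K" "\<forall>k<K. 0 < \<alpha> k"
  shows "u_en K \<alpha> \<le> u_alea K \<alpha> + (real K - 1) / ((Ssum K \<alpha> + 1) * ln (real K))"
proof -
  obtain n where K: "K = Suc n" using assms(1) by (cases K) auto
  define S where "S = Ssum K \<alpha>"
  have "0 < S" unfolding S_def using assms by (intro Ssum_pos) auto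
  have "(\<Sum>k<K. dir_expect K \<alpha> (\<lambda>p. p k * ln (p k)))
      \<le> (\<Sum>k<K. \<alpha> k / S * ln (\<alpha> k / S) + (1 - \<alpha> k / S) / (S + 1))"
    using dir_expect_xlnx_le[OF assms(2)[unfolded K]] by (intro sum_mono) (simp add: K S_def)
  also have "\<dots> = (\<Sum>k<K. \<alpha> k / S * ln (\<alpha> k / S)) + (real K - 1) / (S + 1)"
    using \<open>0 < S\<close> by (simp add: sum.distrib sum_subtractf sum_divide_distrib[symmetric] S_def Ssum_def)
  finally have "- (\<Sum>k<K. \<alpha> k / S * ln (\<alpha> k / S)) / ln (real K)
      \<le> (- (\<Sum>k<K. dir_expect K \<alpha> (\<lambda>p. p k * ln (p k))) + (real K - 1) / (S + 1)) / ln (real K)"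
    using assms(1) by (intro divide_right_mono) auto
  then show ?thesis
    using assms by (simp add: u_alea_eq_sum u_en_eq_sum S_def[symmetric] add_divide_distrib
        diff_divide_distrib divide_divide_eq_left)
qed

lemma u_epis_less_u_v:
  assumes "2 \<le> K" "\<forall>k<K. 0 < \<alpha> k"
  shows "u_epis K \<alpha> < u_v K \<alpha>"
proof -
  define S where "S = Ssum K \<alpha>"
  have "0 < S" unfolding S_def using assms by (intro Ssum_pos) auto
  have "1 < real K" using assms(1) by simp
  then have "0 < ln (real K)" by simp
  have "ln (1 / real K) \<le> 1 / real K - 1" using \<open>1 < real K\<close> by (intro ln_le_minus_one) simp
  then have "real K - 1 \<le> real K * ln (real K)" using \<open>1 < real K\<close> by (simp add: ln_div field_simps)
  then have "(real K - 1) * S \<le> real K * ln (real K) * S"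
    using \<open>0 < S\<close> by (intro mult_right_mono) auto
  also have "\<dots> < real K * ln (real K) * (S + 1)"
    using \<open>1 < real K\<close> \<open>0 < ln (real K)\<close> by (simp add: ring_distribs)
  finally have "(real K - 1) * S < real K * ln (real K) * (S + 1)" .
  then have "(real K - 1) / ((S + 1) * ln (real K)) < real K / S"
    using \<open>0 < S\<close> \<open>0 < ln (real K)\<close> by (simp add: divide_simps mult_ac)
  then show ?thesis
    using u_en_le_u_alea_add[OF assms] by (simp add: u_epis_def u_v_def S_def)
qed

section \<open>Belief, vacuity and dissonance\<close>

lemma sum_belief_add_u_v:
  assumes "Ssum K \<alpha> \<noteq> 0"
  shows "(\<Sum>k<K. belief K \<alpha> k) + u_v K \<alpha> = 1"
proof -
  have "(\<Sum>k<K. belief K \<alpha> k) = (Ssum K \<alpha> - real K) / Ssum K \<alpha>"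
    by (simp add: belief_def Ssum_def sum_divide_distrib[symmetric] sum_subtractf)
  then show ?thesis using assms by (simp add: u_v_def diff_divide_distrib)
qed

lemma Bal_le_one: "0 \<le> x \<Longrightarrow> 0 \<le> y \<Longrightarrow> Bal x y \<le> 1"
  by (simp add: Bal_def)

lemma u_diss_le_sum_belief:
  assumes b: "\<forall>k<K. 0 \<le> belief K \<alpha> k"
  shows "u_diss K \<alpha> \<le> (\<Sum>k<K. belief K \<alpha> k)"
  unfolding u_diss_def Let_def
proof (rule sum_mono)
  fix k assume "k \<in> {..<K}"
  then have bk: "0 \<le> belief K \<alpha> k" using b by simp
  let ?D = "\<Sum>j\<in>{..<K} - {k}. belief K \<alpha> j"
  let ?N = "\<Sum>j\<in>{..<K} - {k}. belief K \<alpha> j * Bal (belief K \<alpha> j) (belief K \<alpha> k)"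
  have "?N \<le> ?D"
    using b bk by (intro sum_mono) (auto intro: mult_left_le Bal_le_one)
  moreover have "0 \<le> ?D" using b by (intro sum_nonneg) auto
  ultimately have "belief K \<alpha> k * (?N / ?D) \<le> belief K \<alpha> k * 1" if "?D \<noteq> 0"
    using bk that by (intro mult_left_mono) (auto simp: divide_le_eq_1)
  then show "(if ?D = 0 then 0 else belief K \<alpha> k * ?N / ?D) \<le> belief K \<alpha> k"
    using bk by simp
qed

lemma u_v_add_u_diss_le_one:
  assumes "0 < K" "\<forall>k<K. 1 \<le> \<alpha> k"
  shows "u_v K \<alpha> + u_diss K \<alpha> \<le> 1"
proof -
  have "0 < Ssum K \<alpha>" using assms by (intro Ssum_pos) (auto intro: less_le_trans[OF zero_less_one])
  then have "\<forall>k<K. 0 \<le> belief K \<alpha> k" using assms(2) by (simp add: belief_def)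
  then have "u_diss K \<alpha> \<le> (\<Sum>k<K. belief K \<alpha> k)" by (rule u_diss_le_sum_belief)
  then show ?thesis using sum_belief_add_u_v[of K \<alpha>] \<open>0 < Ssum K \<alpha>\<close> by simp
qed

section \<open>Opinions with equal evidence\<close>

lemma u_en_equal:
  assumes "2 \<le> K" "\<forall>k<K. 0 < \<alpha> k" "\<forall>j<K. \<forall>k<K. \<alpha> j = \<alpha> k"
  shows "u_en K \<alpha> = 1"
proof -
  have "0 < K" using assms(1) by simp
  then obtain t where const: "\<forall>k<K. \<alpha> k = t" and "0 < t" using assms(2,3) by blast
  then have "Ssum K \<alpha> = real K * t" by (simp add: Ssum_def)
  then have "(\<Sum>k<K. \<alpha> k / Ssum K \<alpha> * ln (\<alpha> k / Ssum K \<alpha>)) = - ln (real K)"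
    using const \<open>0 < t\<close> \<open>0 < K\<close> by (simp add: ln_div)
  then show ?thesis using assms(1) by (simp add: u_en_eq_sum)
qed

lemma u_diss_equal:
  assumes "2 \<le> K" "\<forall>k<K. \<alpha> k = t" "1 < t"
  shows "u_diss K \<alpha> = (\<Sum>k<K. belief K \<alpha> k)"
proof -
  define b where "b = (t - 1) / (real K * t)"
  have "0 < b" using assms by (simp add: b_def)
  have belief: "belief K \<alpha> k = b" if "k < K" for k
    using assms that by (simp add: belief_def Ssum_def b_def)
  have "(let b = belief K \<alpha>; D = \<Sum>j\<in>{..<K} - {k}. b j in
      if D = 0 then 0 else b k * (\<Sum>j\<in>{..<K} - {k}. b j * Bal (b j) (b k)) / D) = b"
    if "k < K" for k
  proof -
    have "(\<Sum>j\<in>{..<K} - {k}. belief K \<alpha> j) = real (K - 1) * b"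
      using that belief by simp
    moreover have "(\<Sum>j\<in>{..<K} - {k}. belief K \<alpha> j * Bal (belief K \<alpha> j) (belief K \<alpha> k))
        = real (K - 1) * b"
      using that belief \<open>0 < b\<close> by (simp add: Bal_def)
    ultimately show ?thesis
      using that assms(1) \<open>0 < b\<close> belief by (simp add: Let_def)
  qed
  then show ?thesis unfolding u_diss_def using belief by simp
qed

lemma equal_evidence:
  fixes S :: real
  assumes "2 \<le> K" "real K < S"
  defines "\<alpha> \<equiv> \<lambda>_::nat. S / real K"
  shows "u_en K \<alpha> = 1" and "u_v K \<alpha> = real K / S" and "u_diss K \<alpha> = 1 - real K / S"
    and "1 - real K / S < u_alea K \<alpha>" and "u_alea K \<alpha> < 1"
proof -
  have "1 < S / real K" "Ssum K \<alpha> = S" using assms by (simp_all add: \<alpha>_def Ssum_def)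
  have pos: "\<forall>k<K. 0 < \<alpha> k" using \<open>1 < S / real K\<close> by (simp add: \<alpha>_def)
  show en: "u_en K \<alpha> = 1" using u_en_equal[OF assms(1) pos] by (simp add: \<alpha>_def)
  show v: "u_v K \<alpha> = real K / S" by (simp add: u_v_def \<open>Ssum K \<alpha> = S\<close>)
  have "\<forall>k<K. \<alpha> k = S / real K" by (simp add: \<alpha>_def)
  then show "u_diss K \<alpha> = 1 - real K / S"
    using u_diss_equal[OF assms(1) _ \<open>1 < S / real K\<close>] sum_belief_add_u_v[of K \<alpha>] assms(1,2)
    by (simp add: v \<open>Ssum K \<alpha> = S\<close>)
  show "1 - real K / S < u_alea K \<alpha>"
    using u_epis_less_u_v[OF assms(1) pos] by (simp add: u_epis_def en v)
  show "u_alea K \<alpha> < 1"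
    using u_alea_less_u_en[OF assms(1) pos] en by simp
qed

lemma vacuous_opinion:
  assumes "2 \<le> K"
  shows "u_v K (\<lambda>_. 1) = 1" and "u_en K (\<lambda>_. 1) = 1" and "u_diss K (\<lambda>_. 1) = 0"
    and "1 / 2 < u_alea K (\<lambda>_. 1)"
proof -
  show "u_v K (\<lambda>_. 1) = 1" using assms by (simp add: u_v_def Ssum_def)
  show en: "u_en K (\<lambda>_. 1) = 1" using u_en_equal[OF assms, of "\<lambda>_. 1"] by simp
  show "u_diss K (\<lambda>_. 1) = 0" by (simp add: u_diss_def belief_def)
  have "1 < real K" using assms by simp
  then have "2 * (real K - 1) / (real K + 1) < ln (real K)" by (rule ln_gt_two_diff_div_sum)
  then have "(real K - 1) / ((real K + 1) * ln (real K)) < 1 / 2"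
    using \<open>1 < real K\<close> by (simp add: field_simps)
  moreover have "1 \<le> u_alea K (\<lambda>_. 1) + (real K - 1) / ((real K + 1) * ln (real K))"
    using u_en_le_u_alea_add[OF assms, of "\<lambda>_. 1"] en by (simp add: Ssum_def)
  ultimately show "1 / 2 < u_alea K (\<lambda>_. 1)" by linarith
qed

lemma equal_evidence_limits:
  assumes "2 \<le> K"
  shows "((\<lambda>S. u_diss K (\<lambda>_. S / real K)) \<longlongrightarrow> 1) at_top"
    and "((\<lambda>S. u_alea K (\<lambda>_. S / real K)) \<longlongrightarrow> 1) at_top"
    and "((\<lambda>S. u_v K (\<lambda>_. S / real K)) \<longlongrightarrow> 0) at_top"
    and "((\<lambda>S. u_epis K (\<lambda>_. S / real K)) \<longlongrightarrow> 0) at_top"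
proof -
  note facts = equal_evidence[OF assms]
  have large: "\<forall>\<^sub>F S in at_top. real K < S" by (rule eventually_gt_at_top)
  have vanish: "((\<lambda>S. real K / S) \<longlongrightarrow> 0) at_top"
    by (rule tendsto_divide_0[OF tendsto_const filterlim_at_top_imp_at_infinity[OF filterlim_ident]])
  then have to_one: "((\<lambda>S. 1 - real K / S) \<longlongrightarrow> 1) at_top"
    using tendsto_diff[OF tendsto_const, of _ 0 _ 1] by simp
  have "\<forall>\<^sub>F S in at_top. 1 - real K / S = u_diss K (\<lambda>_. S / real K)"
    using large by eventually_elim (simp add: facts)
  then show "((\<lambda>S. u_diss K (\<lambda>_. S / real K)) \<longlongrightarrow> 1) at_top"
    by (rule Lim_transform_eventually[OF to_one])
  show alea: "((\<lambda>S. u_alea K (\<lambda>_. S / real K)) \<longlongrightarrow> 1) at_top"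
  proof (rule tendsto_sandwich[OF _ _ to_one tendsto_const])
    show "\<forall>\<^sub>F S in at_top. 1 - real K / S \<le> u_alea K (\<lambda>_. S / real K)"
      using large by eventually_elim (simp add: facts less_imp_le)
    show "\<forall>\<^sub>F S in at_top. u_alea K (\<lambda>_. S / real K) \<le> 1"
      using large by eventually_elim (simp add: facts less_imp_le)
  qed
  have "\<forall>\<^sub>F S in at_top. real K / S = u_v K (\<lambda>_. S / real K)"
    using large by eventually_elim (simp add: facts)
  then show "((\<lambda>S. u_v K (\<lambda>_. S / real K)) \<longlongrightarrow> 0) at_top"
    by (rule Lim_transform_eventually[OF vanish])
  have "\<forall>\<^sub>F S in at_top. 1 - u_alea K (\<lambda>_. S / real K) = u_epis K (\<lambda>_. S / real K)"
    using large by eventually_elim (simp add: facts u_epis_def)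
  then show "((\<lambda>S. u_epis K (\<lambda>_. S / real K)) \<longlongrightarrow> 0) at_top"
    using tendsto_diff[OF tendsto_const alea, of 1] by (auto intro: Lim_transform_eventually)
qed

lemma equal_evidence_eventually_ordered:
  assumes "2 \<le> K"
  shows "\<forall>\<^sub>F S in at_top. (let \<alpha> = (\<lambda>_. S / real K) in
    u_en K \<alpha> > u_alea K \<alpha> \<and> u_alea K \<alpha> > u_diss K \<alpha> \<and>
    u_diss K \<alpha> > u_v K \<alpha> \<and> u_v K \<alpha> > u_epis K \<alpha>)"
  using eventually_gt_at_top[of "2 * real K"]
proof eventually_elim
  case (elim S)
  then have "real K < S" and "real K / S < 1 / 2" using assms by (simp_all add: field_simps)
  moreover have "\<forall>k<K. 0 < S / real K" using \<open>real K < S\<close> assms by simp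
  ultimately show ?case
    using equal_evidence[OF assms \<open>real K < S\<close>] u_epis_less_u_v[OF assms, of "\<lambda>_. S / real K"]
    by (simp add: Let_def)
qed

theorem theorem1:
  fixes K :: nat
  assumes "K \<ge> 2"
  shows
    "(\<forall>\<alpha>. (\<forall>k<K. \<alpha> k \<ge> 1) \<longrightarrow>
         u_v K \<alpha> + u_diss K \<alpha> \<le> 1 \<and> u_v K \<alpha> > u_epis K \<alpha>)
   \<and> (let \<alpha> = (\<lambda>_. 1::real) in
         1 = u_v K \<alpha> \<and> u_v K \<alpha> = u_en K \<alpha> \<and> u_en K \<alpha> > u_alea K \<alpha> \<and>
         u_alea K \<alpha> > u_epis K \<alpha> \<and> u_epis K \<alpha> > u_diss K \<alpha> \<and> u_diss K \<alpha> = 0)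
   \<and> (\<forall>\<alpha>. (\<forall>k<K. \<alpha> k \<ge> 1) \<and> (\<forall>j<K. \<forall>k<K. \<alpha> j = \<alpha> k) \<longrightarrow> u_en K \<alpha> = 1)
   \<and> ((\<lambda>S. u_diss K (\<lambda>_. S / real K)) \<longlongrightarrow> 1) at_top
   \<and> ((\<lambda>S. u_alea K (\<lambda>_. S / real K)) \<longlongrightarrow> 1) at_top
   \<and> ((\<lambda>S. u_v K (\<lambda>_. S / real K)) \<longlongrightarrow> 0) at_top
   \<and> ((\<lambda>S. u_epis K (\<lambda>_. S / real K)) \<longlongrightarrow> 0) at_top
   \<and> (\<forall>\<^sub>F S in at_top. (let \<alpha> = (\<lambda>_. S / real K) in
         u_en K \<alpha> > u_alea K \<alpha> \<and> u_alea K \<alpha> > u_diss K \<alpha> \<and>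
         u_diss K \<alpha> > u_v K \<alpha> \<and> u_v K \<alpha> > u_epis K \<alpha>))"
proof -
  have positive: "\<forall>k<K. 0 < \<alpha> k" if "\<forall>k<K. 1 \<le> \<alpha> k" for \<alpha> :: "nat \<Rightarrow> real"
    using that by (auto intro: less_le_trans[OF zero_less_one])
  have general: "\<forall>\<alpha>. (\<forall>k<K. \<alpha> k \<ge> 1) \<longrightarrow>
      u_v K \<alpha> + u_diss K \<alpha> \<le> 1 \<and> u_v K \<alpha> > u_epis K \<alpha>"
    using assms u_v_add_u_diss_le_one u_epis_less_u_v positive by simp
  have vacuous: "let \<alpha> = (\<lambda>_. 1::real) in
      1 = u_v K \<alpha> \<and> u_v K \<alpha> = u_en K \<alpha> \<and> u_en K \<alpha> > u_alea K \<alpha> \<and>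
      u_alea K \<alpha> > u_epis K \<alpha> \<and> u_epis K \<alpha> > u_diss K \<alpha> \<and> u_diss K \<alpha> = 0"
    using vacuous_opinion[OF assms] u_alea_less_u_en[OF assms, of "\<lambda>_. 1"]
    by (simp add: Let_def u_epis_def)
  have equal: "\<forall>\<alpha>. (\<forall>k<K. \<alpha> k \<ge> 1) \<and> (\<forall>j<K. \<forall>k<K. \<alpha> j = \<alpha> k) \<longrightarrow> u_en K \<alpha> = 1"
    using u_en_equal[OF assms] positive by blast
  show ?thesis
    by (intro conjI general vacuous equal equal_evidence_limits[OF assms]
        equal_evidence_eventually_ordered[OF assms])
qed

end
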